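(* Let $\mathcal{K}$ be a finite set of arms, $C_0\ge 10$, $t_0=2C_0|\mathcal{K}|$ and $T>\frac{(t_0+1)^2}{e^2}$. Under the $\epsilon$-decay random sampling method, for each arm $k\in\mathcal{K}$ the number $n_k$ of random samples of arm $k$ drawn up to time $T$ satisfies $$C_0(1+\log(T+1)-\log(t_0+1))\le n_k \le3C_0(1+\log(T)-\log(t_0))$$ with probability at least $1-\frac{2}{T+1}$.
   Context: $\epsilon$-decay random sampling method: at each time $t=1,2,\dots$, independently of everything else, the decision-maker draws a random sample with probability $\min\{1,t_0/t\}$; when a random sample is drawn, an arm is selected uniformly at random from $\mathcal{K}$ (each with probability $1/|\mathcal{K}|$). $n_k$ is the number of times $t\le T$ at which a random sample was drawn and arm $k$ was selected. *)

theory Defs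
  imports "HOL-Probability.Probability"
begin

definition eps_step :: "'a set \<Rightarrow> real \<Rightarrow> nat \<Rightarrow> 'a option pmf" where
  "eps_step K t0 t =
     bernoulli_pmf (min 1 (t0 / real t)) \<bind>
       (\<lambda>b. if b then map_pmf Some (pmf_of_set K) else return_pmf None)"

definition eps_decay :: "'a set \<Rightarrow> real \<Rightarrow> nat \<Rightarrow> (nat \<Rightarrow> 'a option) pmf" where
  "eps_decay K t0 T = Pi_pmf {1..T} None (eps_step K t0)"

definition n_count :: "nat \<Rightarrow> 'a \<Rightarrow> (nat \<Rightarrow> 'a option) \<Rightarrow> nat" where
  "n_count T k \<omega> = card {t \<in> {1..T}. \<omega> t = Some k}"

end

theory Submission
  imports Defs
begin

text \<open>The count n_k is a sum of independent indicators, the one at time t having success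
  probability min 1 (t0/t) / |K|. Its moment generating function is therefore at most
  exp ((e^s - 1) \<mu>), where \<mu> is the mean, and Markov's inequality gives Chernoff bounds for
  both tails; s = ln (3/2) and s = - ln 2 make e^s - 1 = 1/2 and -1/2. Comparing the sum of
  min 1 (t0/t) with the integral of min 1 (t0/x) puts \<mu> between
  2 C0 (1 + ln (T+1) - ln (t0+1)) - 1 and 2 C0 (1 + ln T - ln t0), and the hypothesis on T
  makes each of these logarithmic factors at least half of ln T, resp. ln (T+1). Since
  C0 \<ge> 10, each tail then has probability at most 1/(T+1).\<close>

lemma expectation_exp_count_Pi_pmf:
  fixes p :: "'i \<Rightarrow> 'b pmf"
  assumes "finite I"
  shows "measure_pmf.expectation (Pi_pmf I d p) (\<lambda>\<omega>. exp (s * real (card {i\<in>I. \<omega> i = x})))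
       = (\<Prod>i\<in>I. 1 + pmf (p i) x * (exp s - 1))"
proof -
  have "exp (s * real (card {i\<in>I. \<omega> i = x})) = (\<Prod>i\<in>I. exp (s * of_bool (\<omega> i = x)))" for \<omega>
  proof -
    have "real (card {i\<in>I. \<omega> i = x}) = (\<Sum>i\<in>I. of_bool (\<omega> i = x))"
      using assms by (simp add: Collect_conj_eq Int_commute)
    then show ?thesis
      by (simp only: sum_distrib_left exp_sum[OF assms])
  qed
  moreover have "measure_pmf.expectation (Pi_pmf I d p) (\<lambda>\<omega>. \<Prod>i\<in>I. exp (s * of_bool (\<omega> i = x)))
      = (\<Prod>i\<in>I. measure_pmf.expectation (p i) (\<lambda>v. exp (s * of_bool (v = x))))"
    by (rule expectation_prod_Pi_pmf)
       (auto intro: assms measure_pmf.integrable_const_bound[where B = "max 1 (exp s)"])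
  moreover have "measure_pmf.expectation (q :: 'b pmf) (\<lambda>v. exp (s * of_bool (v = x)))
      = 1 + pmf q x * (exp s - 1)" for q
  proof -
    have "(\<lambda>v. exp (s * of_bool (v = x))) = (\<lambda>v. 1 + (exp s - 1) * indicator {x} v)"
      by (auto simp: indicator_def)
    moreover have "integrable q (\<lambda>v. (exp s - 1) * indicator {x} v :: real)"
      by (intro integrable_mult_right integrable_real_indicator) (auto simp flip: less_top)
    ultimately show ?thesis
      by (simp add: Bochner_Integration.integral_add measure_pmf_single mult.commute)
  qed
  ultimately show ?thesis by simp
qed

lemma expectation_exp_count_Pi_pmf_le:
  fixes p :: "'i \<Rightarrow> 'b pmf"
  assumes "finite I"
  shows "measure_pmf.expectation (Pi_pmf I d p) (\<lambda>\<omega>. exp (s * real (card {i\<in>I. \<omega> i = x})))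
       \<le> exp ((exp s - 1) * (\<Sum>i\<in>I. pmf (p i) x))"
proof -
  have "0 \<le> 1 + q * (exp s - 1) \<and> 1 + q * (exp s - 1) \<le> exp (q * (exp s - 1))"
    if "0 \<le> q" "q \<le> 1" for q :: real
  proof
    have "0 \<le> (1 - q) + q * exp s"
      using that by simp
    then show "0 \<le> 1 + q * (exp s - 1)"
      by (simp add: algebra_simps)
  qed (rule exp_ge_add_one_self)
  then have "(\<Prod>i\<in>I. 1 + pmf (p i) x * (exp s - 1)) \<le> (\<Prod>i\<in>I. exp (pmf (p i) x * (exp s - 1)))"
    by (intro prod_mono) (simp add: pmf_le_1)
  also have "\<dots> = exp ((exp s - 1) * (\<Sum>i\<in>I. pmf (p i) x))"
    by (simp add: exp_sum assms sum_distrib_left mult.commute)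
  finally show ?thesis
    by (simp add: expectation_exp_count_Pi_pmf assms)
qed

lemma prob_count_Pi_pmf_exp_tail:
  fixes p :: "'i \<Rightarrow> 'b pmf"
  assumes "finite I"
  shows "measure_pmf.prob (Pi_pmf I d p) {\<omega>. s * a \<le> s * real (card {i\<in>I. \<omega> i = x})}
       \<le> exp ((exp s - 1) * (\<Sum>i\<in>I. pmf (p i) x) - s * a)"
proof -
  let ?N = "\<lambda>\<omega>. real (card {i\<in>I. \<omega> i = x})"
  have "exp (s * ?N \<omega>) \<le> exp (\<bar>s\<bar> * card I)" for \<omega>
  proof -
    have "?N \<omega> \<le> card I"
      using assms by (simp add: card_mono)
    then have "\<bar>s\<bar> * ?N \<omega> \<le> \<bar>s\<bar> * card I"
      by (simp add: mult_left_mono)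
    moreover have "s * ?N \<omega> \<le> \<bar>s\<bar> * ?N \<omega>"
      by (simp add: mult_right_mono)
    ultimately show ?thesis
      by simp
  qed
  then have "integrable (Pi_pmf I d p) (\<lambda>\<omega>. exp (s * ?N \<omega>))"
    by (intro measure_pmf.integrable_const_bound[where B = "exp (\<bar>s\<bar> * card I)"]) auto
  then have "measure_pmf.prob (Pi_pmf I d p) {\<omega>. exp (s * a) \<le> exp (s * ?N \<omega>)}
      \<le> measure_pmf.expectation (Pi_pmf I d p) (\<lambda>\<omega>. exp (s * ?N \<omega>)) / exp (s * a)"
    using integral_Markov_inequality_measure
        [of "Pi_pmf I d p" "\<lambda>\<omega>. exp (s * ?N \<omega>)" UNIV "exp (s * a)"]
    by simp
  also have "\<dots> \<le> exp ((exp s - 1) * (\<Sum>i\<in>I. pmf (p i) x)) / exp (s * a)"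
    by (intro divide_right_mono expectation_exp_count_Pi_pmf_le assms) simp
  finally show ?thesis
    by (simp add: exp_diff)
qed

lemma measure_pmf_prob_between_ge:
  fixes p :: "'b pmf" and X :: "'b \<Rightarrow> real"
  shows "1 - measure_pmf.prob p {x. X x \<le> b} - measure_pmf.prob p {x. a \<le> X x}
       \<le> measure_pmf.prob p {x. b \<le> X x \<and> X x \<le> a}"
proof -
  have "measure_pmf.prob p (- {x. b \<le> X x \<and> X x \<le> a})
      \<le> measure_pmf.prob p ({x. X x \<le> b} \<union> {x. a \<le> X x})"
    by (intro measure_pmf.finite_measure_mono) auto
  also have "\<dots> \<le> measure_pmf.prob p {x. X x \<le> b} + measure_pmf.prob p {x. a \<le> X x}"
    by (rule measure_subadditive) (auto simp: measure_pmf.emeasure_finite)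
  finally show ?thesis
    using measure_pmf.prob_compl[of "{x. b \<le> X x \<and> X x \<le> a}" p]
    by (simp add: Compl_eq_Diff_UNIV)
qed

definition expected_samples :: "real \<Rightarrow> nat \<Rightarrow> real" where
  "expected_samples t0 n = (\<Sum>t = 1..n. min 1 (t0 / real t))"

lemma expected_samples_Suc:
  "expected_samples t0 (Suc n) = expected_samples t0 n + min 1 (t0 / real (Suc n))"
  unfolding expected_samples_def by (simp add: sum.cl_ivl_Suc)

text \<open>rate_integral t0 x is the integral of the decreasing function min 1 (t0/y) over [0, x],
  so its increment over [x, x + 1] dominates the value min 1 (t0/(x + 1)).\<close>

definition rate_integral :: "real \<Rightarrow> real \<Rightarrow> real" where
  "rate_integral t0 x = (if x \<le> t0 then x else t0 * (1 + ln x - ln t0))"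

lemma ln_ge_one_minus_inverse:
  assumes "0 < (x::real)"
  shows "1 - 1 / x \<le> ln x"
  using ln_le_minus_one[of "1 / x"] assms by (simp add: ln_div)

lemma rate_integral_increment:
  assumes "0 < t0" "0 \<le> x"
  shows "min 1 (t0 / (x + 1)) \<le> rate_integral t0 (x + 1) - rate_integral t0 x"
proof -
  consider "x + 1 \<le> t0" | "x \<le> t0" "t0 < x + 1" | "t0 < x"
    by linarith
  then show ?thesis
  proof cases
    case 1
    then show ?thesis
      by (simp add: rate_integral_def)
  next
    case 2
    define s where "s = x + 1"
    have s: "t0 < s" "s \<le> t0 + 1"
      using 2 by (simp_all add: s_def)
    have "1 - t0 / s \<le> ln s - ln t0"
      using ln_ge_one_minus_inverse[of "s / t0"] s assms by (simp add: ln_div)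
    then have "t0 * (2 - t0 / s) \<le> t0 * (1 + ln s - ln t0)"
      using assms by (intro mult_left_mono) auto
    moreover have "t0 / s \<le> t0 * (2 - t0 / s) - (s - 1)"
    proof -
      have "0 \<le> (s - t0) * (1 - (s - t0)) / s"
        using s assms by simp
      also have "\<dots> = t0 * (2 - t0 / s) - (s - 1) - t0 / s"
        using s assms by (simp add: field_simps)
      finally show ?thesis
        by simp
    qed
    ultimately show ?thesis
      using 2 s by (simp add: rate_integral_def s_def min_def)
  next
    case 3
    have "1 / (x + 1) \<le> ln (x + 1) - ln x"
      using ln_ge_one_minus_inverse[of "(x + 1) / x"] 3 assms by (simp add: ln_div field_simps)
    then have "t0 / (x + 1) \<le> t0 * (ln (x + 1) - ln x)"
      using assms mult_left_mono[of _ _ t0] by fastforce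
    then show ?thesis
      using 3 by (simp add: rate_integral_def min_def algebra_simps)
  qed
qed

lemma expected_samples_le_rate_integral:
  assumes "0 < t0"
  shows "expected_samples t0 n \<le> rate_integral t0 n"
proof (induction n)
  case 0
  then show ?case
    using assms by (simp add: expected_samples_def rate_integral_def)
next
  case (Suc n)
  then show ?case
    using rate_integral_increment[OF assms, of n] by (simp add: expected_samples_Suc add.commute)
qed

lemma expected_samples_ge:
  assumes "0 \<le> t0" "t0 \<le> real n"
  shows "t0 * (1 + ln (real n + 1) - ln (t0 + 1)) - 1 \<le> expected_samples t0 n"
proof -
  define m where "m = nat \<lfloor>t0\<rfloor>"
  have m: "t0 - 1 < real m" "real m \<le> t0"
    using assms(1) by (simp_all add: m_def)
  have "real m + t0 * (ln (real n' + 1) - ln (real m + 1)) \<le> expected_samples t0 n'"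
    if "m \<le> n'" for n'
    using that
  proof (induction rule: dec_induct)
    case base
    have "min 1 (t0 / real t) = 1" if "t \<in> {1..m}" for t
      using that m by (simp add: min_def field_simps)
    then show ?case
      by (simp add: expected_samples_def)
  next
    case (step n')
    have "ln (real n' + 2) - ln (real n' + 1) \<le> 1 / (real n' + 1)"
      using ln_add_one_self_le_self[of "1 / (real n' + 1)"] by (simp add: ln_div field_simps)
    then have "t0 * (ln (real n' + 2) - ln (real n' + 1)) \<le> t0 / (real n' + 1)"
      using assms(1) mult_left_mono[of _ _ t0] by fastforce
    moreover have "min 1 (t0 / real (Suc n')) = t0 / (real n' + 1)"
      using step.hyps m by (simp add: min_def field_simps)
    ultimately show ?case
      using step.IH by (simp add: expected_samples_Suc algebra_simps)
  qed
  moreover have "m \<le> n"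
    using m assms(2) by linarith
  moreover have "ln (real m + 1) \<le> ln (t0 + 1)"
    using m by simp
  ultimately show ?thesis
    using m assms(1) mult_left_mono[of "ln (real m + 1)" "ln (t0 + 1)" t0]
    by (fastforce simp: algebra_simps)
qed

lemma ln_three_halves_ge: "0.402 \<le> ln (3/2::real)"
proof -
  have "(2/3::real) \<le> (1 - 0.402 / real (32::nat)) ^ 32"
    by (simp add: power_numeral_reduce)
  also have "\<dots> \<le> exp (-0.402)"
    by (rule exp_ge_one_minus_x_over_n_power_n) auto
  finally have "exp 0.402 \<le> (3/2::real)"
    by (simp add: exp_minus field_simps)
  then show ?thesis
    by (subst ln_ge_iff) auto
qed

lemma ln_two_le: "ln (2::real) \<le> 0.75"
proof -
  have "(2::real) \<le> (1 + 0.75 / real (8::nat)) ^ 8"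
    by (simp add: power_numeral_reduce)
  also have "\<dots> \<le> exp 0.75"
    by (rule exp_ge_one_plus_x_over_n_power_n) auto
  finally have "ln 2 \<le> ln (exp (0.75::real))"
    by (subst ln_le_cancel_iff) auto
  then show ?thesis
    by simp
qed

lemma horizon_gt:
  fixes x t0 :: real
  assumes "20 \<le> t0" "(t0 + 1)^2 / (exp 1)^2 < x"
  shows "t0 < x" "49 < x"
proof -
  have "(exp 1)^2 \<le> (3::real)^2"
    using exp_le by (intro power_mono) auto
  then have "(t0 + 1)^2 / 9 \<le> (t0 + 1)^2 / (exp 1)^2"
    by (intro divide_left_mono) auto
  then have "(t0 + 1)^2 < 9 * x"
    using assms(2) by linarith
  moreover have "(t0 + 1)^2 = t0 * t0 + 2 * t0 + 1"
    by (simp add: power2_eq_square algebra_simps)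
  moreover have "20 * t0 \<le> t0 * t0"
    using assms(1) by (intro mult_right_mono) auto
  ultimately show "t0 < x" "49 < x"
    using assms(1) by linarith+
qed

lemma ln_horizon_gt:
  fixes x t0 :: real
  assumes "0 < t0" "(t0 + 1)^2 / (exp 1)^2 < x"
  shows "2 * ln (t0 + 1) < 2 + ln x"
proof -
  have "0 < (t0 + 1)^2 / (exp 1)^2"
    using assms(1) by simp
  then have "0 < x"
    using assms(2) by linarith
  have "ln ((t0 + 1)^2) < ln ((exp 1)^2 * x)"
    using assms \<open>0 < x\<close> by (subst ln_less_cancel_iff) (auto simp: field_simps)
  then show ?thesis
    using assms(1) \<open>0 < x\<close> by (simp add: ln_mult ln_realpow)
qed

lemma pmf_eps_step_Some:
  assumes "finite K" "k \<in> K" "0 \<le> t0"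
  shows "pmf (eps_step K t0 t) (Some k) = min 1 (t0 / real t) / real (card K)"
proof -
  have "K \<noteq> {}"
    using assms(2) by auto
  then have "pmf (map_pmf Some (pmf_of_set K)) (Some k) = 1 / real (card K)"
    using assms(1,2) by (simp add: pmf_map_inj')
  then show ?thesis
    using assms(3) by (simp add: eps_step_def pmf_bind)
qed

lemma prob_n_count_exp_tail:
  assumes "finite K" "k \<in> K" "0 \<le> t0"
  shows "measure_pmf.prob (eps_decay K t0 T) {\<omega>. s * a \<le> s * real (n_count T k \<omega>)}
       \<le> exp ((exp s - 1) * (expected_samples t0 T / real (card K)) - s * a)"
proof -
  have "(\<Sum>t\<in>{1..T}. pmf (eps_step K t0 t) (Some k)) = expected_samples t0 T / real (card K)"
    using assms by (simp add: pmf_eps_step_Some expected_samples_def sum_divide_distrib)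
  then show ?thesis
    using prob_count_Pi_pmf_exp_tail[of "{1..T}" None "eps_step K t0" s a "Some k"]
    by (simp add: eps_decay_def n_count_def)
qed

lemma parameter_bounds:
  fixes K :: "'a set" and C0 t0 :: real and T :: nat
  assumes "finite K" "k \<in> K" "10 \<le> C0" "t0 = 2 * C0 * real (card K)"
    and "(t0 + 1)^2 / (exp 1)^2 < real T"
  shows "1 \<le> real (card K)" "20 \<le> t0" "t0 < real T" "49 < real T"
    and "2 * ln (t0 + 1) < 2 + ln (real T)"
proof -
  show "1 \<le> real (card K)"
    using assms(1,2) by (simp add: Suc_le_eq card_gt_0_iff) blast
  then have "C0 * 1 \<le> C0 * real (card K)"
    using assms(3) by (intro mult_left_mono) auto
  moreover have "t0 = 2 * (C0 * real (card K))"
    using assms(4) by simp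
  ultimately show "20 \<le> t0"
    using assms(3) by linarith
  then show "t0 < real T" "49 < real T" "2 * ln (t0 + 1) < 2 + ln (real T)"
    using horizon_gt[OF _ assms(5)] ln_horizon_gt[OF _ assms(5)] by auto
qed

lemma n_count_upper_tail:
  fixes K :: "'a set" and C0 t0 :: real and T :: nat
  assumes "finite K" "k \<in> K" "10 \<le> C0" "t0 = 2 * C0 * real (card K)"
    and "(t0 + 1)^2 / (exp 1)^2 < real T"
  shows "measure_pmf.prob (eps_decay K t0 T)
           {\<omega>. 3 * C0 * (1 + ln (real T) - ln t0) \<le> real (n_count T k \<omega>)} \<le> 1 / (real T + 1)"
proof -
  define L where "L = 1 + ln (real T) - ln t0"
  define \<mu> where "\<mu> = expected_samples t0 T / real (card K)"
  define s :: real where "s = ln (3/2)"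
  note par = parameter_bounds[OF assms]
  moreover have "ln t0 < ln (t0 + 1)"
    using par(2) by simp
  ultimately have "ln (real T) < 2 * L"
    unfolding L_def by argo
  have "\<mu> \<le> t0 * L / real (card K)"
    using expected_samples_le_rate_integral[of t0 T] par
    unfolding \<mu>_def by (intro divide_right_mono) (simp_all add: rate_integral_def L_def)
  then have mean: "\<mu> \<le> 2 * (C0 * L)"
    using par(1) by (simp add: assms(4))
  have "1 \<le> ln (real T)"
    using par(4) exp_le by (subst ln_ge_iff) auto
  then have "0 \<le> L"
    using \<open>ln (real T) < 2 * L\<close> by simp
  have "(exp s - 1) * \<mu> - s * (3 * C0 * L) \<le> - ln (real T + 1)"
  proof -
    have "(exp s - 1) * \<mu> = \<mu> / 2"
      by (simp add: s_def)
    moreover have "201 / 500 * (3 * C0 * L) \<le> s * (3 * C0 * L)"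
      using ln_three_halves_ge \<open>0 \<le> L\<close> assms(3) by (intro mult_right_mono) (auto simp: s_def)
    moreover have "10 * L \<le> C0 * L"
      using \<open>0 \<le> L\<close> assms(3) by (intro mult_right_mono) auto
    moreover have "ln (real T + 1) - ln (real T) \<le> 1 / real T"
      using ln_add_one_self_le_self[of "1 / real T"] par(4) by (simp add: ln_div field_simps)
    moreover have "1 / real T \<le> 3 / 100"
      using par(4) by (simp add: field_simps)
    ultimately show ?thesis
      using mean \<open>ln (real T) < 2 * L\<close> \<open>1 \<le> ln (real T)\<close> by linarith
  qed
  then have "measure_pmf.prob (eps_decay K t0 T) {\<omega>. s * (3 * C0 * L) \<le> s * real (n_count T k \<omega>)}
      \<le> exp (- ln (real T + 1))"
    using prob_n_count_exp_tail[OF assms(1,2), of t0 T s "3 * C0 * L"] par(2)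
    unfolding \<mu>_def by (smt (verit) exp_mono)
  moreover have "s * (3 * C0 * L) \<le> s * real (n_count T k \<omega>)
      \<longleftrightarrow> 3 * C0 * L \<le> real (n_count T k \<omega>)" for \<omega>
    by (simp add: s_def mult.assoc)
  ultimately show ?thesis
    by (simp add: L_def exp_minus inverse_eq_divide)
qed

lemma n_count_lower_tail:
  fixes K :: "'a set" and C0 t0 :: real and T :: nat
  assumes "finite K" "k \<in> K" "10 \<le> C0" "t0 = 2 * C0 * real (card K)"
    and "(t0 + 1)^2 / (exp 1)^2 < real T"
  shows "measure_pmf.prob (eps_decay K t0 T)
           {\<omega>. real (n_count T k \<omega>) \<le> C0 * (1 + ln (real T + 1) - ln (t0 + 1))} \<le> 1 / (real T + 1)"
proof -
  define L where "L = 1 + ln (real T + 1) - ln (t0 + 1)"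
  define \<mu> where "\<mu> = expected_samples t0 T / real (card K)"
  define s :: real where "s = - ln 2"
  note par = parameter_bounds[OF assms]
  moreover have "ln (real T) \<le> ln (real T + 1)"
    using par(4) by simp
  ultimately have "ln (real T + 1) \<le> 2 * L"
    unfolding L_def by argo
  have "(t0 * L - 1) / real (card K) \<le> \<mu>"
    using expected_samples_ge[of t0 T] par
    unfolding \<mu>_def L_def by (intro divide_right_mono) simp_all
  moreover have "(t0 * L - 1) / real (card K) = 2 * (C0 * L) - 1 / real (card K)"
    using par(1) by (simp add: assms(4) field_simps)
  moreover have "1 / real (card K) \<le> 1"
    using par(1) by simp
  ultimately have mean: "2 * (C0 * L) - 1 \<le> \<mu>"
    by linarith
  have "exp 2 = (exp 1 :: real)^2"
    by (simp add: exp_of_nat_mult[symmetric])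
  also have "\<dots> \<le> (3::real)^2"
    using exp_le by (intro power_mono) auto
  finally have "exp 2 \<le> real T + 1"
    using par(4) by simp
  then have "2 \<le> ln (real T + 1)"
    by (subst ln_ge_iff) auto
  then have "0 \<le> L"
    using \<open>ln (real T + 1) \<le> 2 * L\<close> by simp
  have "(exp s - 1) * \<mu> - s * (C0 * L) \<le> - ln (real T + 1)"
  proof -
    have "(exp s - 1) * \<mu> = - \<mu> / 2"
      by (simp add: s_def exp_minus)
    moreover have "- s * (C0 * L) \<le> 3 / 4 * (C0 * L)"
      using ln_two_le \<open>0 \<le> L\<close> assms(3) by (intro mult_right_mono) (auto simp: s_def)
    moreover have "10 * L \<le> C0 * L"
      using \<open>0 \<le> L\<close> assms(3) by (intro mult_right_mono) auto
    ultimately show ?thesis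
      using mean \<open>ln (real T + 1) \<le> 2 * L\<close> \<open>2 \<le> ln (real T + 1)\<close> by linarith
  qed
  then have "measure_pmf.prob (eps_decay K t0 T) {\<omega>. s * (C0 * L) \<le> s * real (n_count T k \<omega>)}
      \<le> exp (- ln (real T + 1))"
    using prob_n_count_exp_tail[OF assms(1,2), of t0 T s "C0 * L"] par(2)
    unfolding \<mu>_def by (smt (verit) exp_mono)
  moreover have "s * (C0 * L) \<le> s * real (n_count T k \<omega>)
      \<longleftrightarrow> real (n_count T k \<omega>) \<le> C0 * L" for \<omega>
    by (simp add: s_def)
  ultimately show ?thesis
    by (simp add: L_def exp_minus inverse_eq_divide)
qed

theorem proposition2:
  fixes K :: "'a set" and C0 t0 :: real and T :: nat and k :: 'a
  assumes "finite K"
    and "C0 \<ge> 10"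
    and "t0 = 2 * C0 * real (card K)"
    and "real T > (t0 + 1)^2 / (exp 1)^2"
    and "k \<in> K"
  shows "measure_pmf.prob (eps_decay K t0 T)
           {\<omega>. C0 * (1 + ln (real T + 1) - ln (t0 + 1)) \<le> real (n_count T k \<omega>) \<and>
                real (n_count T k \<omega>) \<le> 3 * C0 * (1 + ln (real T) - ln t0)}
         \<ge> 1 - 2 / (real T + 1)"
  using measure_pmf_prob_between_ge[of "eps_decay K t0 T" "\<lambda>\<omega>. real (n_count T k \<omega>)"
      "C0 * (1 + ln (real T + 1) - ln (t0 + 1))" "3 * C0 * (1 + ln (real T) - ln t0)"]
    n_count_lower_tail[OF assms(1,5,2,3,4)] n_count_upper_tail[OF assms(1,5,2,3,4)]
  by simp

end
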